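(* Let $A$ be a finite set and $p : A \to [0,1]$. Let $\{X_i(u)\}_{i \ge 1, u \in A}$ be independent random variables with $X_i(u) \sim \mathrm{Bernoulli}(p(u))$. For $n \ge 1$ define $U_n(u) := \mathds{1}\{\sum_{i=1}^n X_i(u) = 1\}$, $\hat R_n := \frac{1}{n}\sum_{u \in A} U_n(u)$, and $\lambda := \sum_{u \in A} p(u)$. Then for every integer $s \ge 3$ and every $\delta \in (0,1)$, \[ \mathbb{P}\left( \hat R_s \le \hat R_{s-1} - \frac{\lambda}{e(s-2)} - \sqrt{\frac{2\lambda}{s-1}\log(1/\delta)} - \frac{1}{3(s-1)}\log(1/\delta) \right) \le \delta . \]
   Context: Model: a single influencer is connected to a finite set $A$ of basic nodes; at each selection $i$, each node $u\in A$ is activated independently with probability $p(u)$, independently across selections. $\hat R_n$ is the Good-Turing estimator of the remaining potential after $n$ selections; $e$ is Euler's number. *)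

theory Defs
  imports "HOL-Probability.Probability"
begin

definition U :: "(nat \<Rightarrow> 'a \<Rightarrow> 'w \<Rightarrow> bool) \<Rightarrow> nat \<Rightarrow> 'a \<Rightarrow> 'w \<Rightarrow> real" where
  "U X n u w = (if card {i \<in> {1..n}. X i u w} = 1 then 1 else 0)"

definition Rhat :: "(nat \<Rightarrow> 'a \<Rightarrow> 'w \<Rightarrow> bool) \<Rightarrow> 'a set \<Rightarrow> nat \<Rightarrow> 'w \<Rightarrow> real" where
  "Rhat X A n w = (1 / real n) * (\<Sum>u\<in>A. U X n u w)"

end

theory Submission
  imports Defs
begin

text \<open>Write \<open>m = s - 1\<close>. Then \<open>m (R\<^sub>m - R\<^sub>m\<^sub>+\<^sub>1)\<close> is a sum over the nodes of
  independent variables \<open>T\<^sub>u = U\<^sub>m(u) - m/(m+1) U\<^sub>m\<^sub>+\<^sub>1(u)\<close>, each a function of the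
  activation times of \<open>u\<close> among the first \<open>m + 1\<close> selections.  Computing the moment generating
  function of \<open>T\<^sub>u\<close> exactly and bounding it termwise gives the Bernstein-type estimate
  \<open>E exp(\<theta> T\<^sub>u) \<le> exp(\<theta> p(u) m/(e(m-1)) + \<theta>\<^sup>2/(2(1-\<theta>/3)) p(u))\<close> for \<open>0 \<le> \<theta> < 3\<close>:
  the mean of \<open>T\<^sub>u\<close> is at most \<open>p(u) m/(e(m-1))\<close> and its second-moment proxy at most
  \<open>p(u)\<close>.  A Chernoff bound at \<open>\<theta> = 3r/(r+3)\<close>, \<open>r = \<surd>(log(1/\<delta>)/\<lambda>)\<close>, finishes the
  proof; if \<open>\<lambda> = 0\<close> every \<open>T\<^sub>u\<close> vanishes and \<open>\<theta> = 3\<close> works.\<close>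

lemma two_mult_three_pow_le_fact: "2 * 3 ^ k \<le> (fact (k + 2) :: real)"
proof (induction k)
  case 0
  then show ?case by simp
next
  case (Suc k)
  have "3 * (2 * 3 ^ k) \<le> real (k + 3) * fact (k + 2)"
    using Suc by (intro mult_mono) auto
  also have "\<dots> = fact (Suc k + 2)"
    by (simp add: fact_Suc algebra_simps)
  finally show ?case by simp
qed

definition bernstein_psi :: "real \<Rightarrow> real" where
  "bernstein_psi \<theta> = \<theta>^2 / (2 * (1 - \<theta> / 3))"

text \<open>Compare the tail of the exponential series termwise with a geometric series of ratio \<open>x/3\<close>.\<close>
lemma exp_le_bernstein:
  fixes x :: real
  assumes "0 \<le> x" "x < 3"
  shows "exp x \<le> 1 + x + bernstein_psi x"
proof -
  have "(\<lambda>n. x^n / fact n) sums exp x"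
    using exp_converges[of x] by (simp add: divide_inverse_commute scaleR_conv_of_real mult.commute)
  then have tail: "(\<lambda>n. x^(n+2) / fact (n+2)) sums (exp x - (1 + x))"
    by (subst sums_iff_shift) (simp add: numeral_2_eq_2)
  have geom: "(\<lambda>n. x^2/2 * (x/3)^n) sums (x^2/2 * (1 / (1 - x/3)))"
    using assms by (intro sums_mult geometric_sums) auto
  have "x^(n+2) / fact (n+2) \<le> x^2/2 * (x/3)^n" for n
  proof -
    have "x^(n+2) / fact (n+2) \<le> x^(n+2) / (2 * 3^n)"
      using two_mult_three_pow_le_fact[of n] assms by (intro divide_left_mono) auto
    also have "\<dots> = x^2/2 * (x/3)^n"
      by (simp add: power_add power_divide power2_eq_square)
    finally show ?thesis .
  qed
  from sums_le[OF this tail geom] show ?thesis by (simp add: bernstein_psi_def)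
qed

lemma exp_le_quadratic_of_nonpos:
  fixes x :: real
  assumes "x \<le> 0"
  shows "exp x \<le> 1 + x + x^2 / 2"
proof -
  have "1 + 0 + 0^2/2 - exp 0 \<le> 1 + x + x^2/2 - exp x"
  proof (rule DERIV_nonpos_imp_nonincreasing[OF assms])
    fix y :: real
    have "((\<lambda>y. 1 + y + y^2/2 - exp y) has_real_derivative (1 + y - exp y)) (at y)"
      by (auto intro!: derivative_eq_intros)
    then show "\<exists>d. ((\<lambda>y. 1 + y + y^2/2 - exp y) has_real_derivative d) (at y) \<and> d \<le> 0"
      using exp_ge_add_one_self[of y] by (intro exI[of _ "1 + y - exp y"]) auto
  qed
  then show ?thesis by simp
qed

lemma mult_one_minus_pow_le:
  fixes p :: real
  assumes "0 \<le> p" "p \<le> 1" "n \<ge> 1"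
  shows "p * (1 - p) ^ n \<le> 1 / (exp 1 * n)"
proof -
  have "(1 - p) ^ n \<le> exp (-p) ^ n"
    using assms exp_ge_add_one_self[of "-p"] by (intro power_mono) auto
  also have "\<dots> = exp (- (n * p))"
    by (simp add: exp_of_nat_mult[symmetric])
  finally have "p * (1 - p) ^ n \<le> p * exp (- (n * p))"
    using assms by (intro mult_left_mono) auto
  also have "n * p * exp (- (n * p)) \<le> exp (n * p - 1) * exp (- (n * p))"
    using exp_ge_add_one_self[of "n * p - 1"] by (intro mult_right_mono) auto
  then have "p * exp (- (n * p)) \<le> exp (-1) / n"
    using assms by (simp add: field_simps flip: exp_add)
  finally show ?thesis
    by (simp add: exp_minus field_simps)
qed

lemma one_minus_pow_mult_le_one:
  fixes p :: real
  assumes "0 \<le> p" "p \<le> 1"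
  shows "(1 - p) ^ n * (1 + n * p) \<le> 1"
proof -
  have "(1 - p) ^ n * (1 + n * p) \<le> (1 - p) ^ n * (1 + p) ^ n"
    using Bernoulli_inequality[of p n] assms by (intro mult_left_mono) auto
  also have "\<dots> = (1 - p^2) ^ n"
    by (simp add: power_mult_distrib[symmetric] algebra_simps power2_eq_square)
  also have "\<dots> \<le> 1"
    using assms by (intro power_le_one) (auto simp: power_le_one)
  finally show ?thesis .
qed

lemma bernstein_psi_ge: "0 \<le> \<theta> \<Longrightarrow> \<theta> < 3 \<Longrightarrow> \<theta>^2 / 2 \<le> bernstein_psi \<theta>"
  by (auto simp: bernstein_psi_def field_simps)

lemma bernstein_psi_scale:
  assumes "0 \<le> \<theta>" "\<theta> < 3" "1 \<le> s"
  shows "bernstein_psi (\<theta> / s) \<le> bernstein_psi \<theta> / s^2"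
proof -
  have "\<theta> / s \<le> \<theta>"
    using assms mult_left_mono[of 1 s \<theta>] by (simp add: field_simps)
  then have "(\<theta>/s)^2 / (2 * (1 - (\<theta>/s)/3)) \<le> (\<theta>/s)^2 / (2 * (1 - \<theta>/3))"
    using assms by (intro divide_left_mono mult_pos_pos) auto
  then show ?thesis
    by (simp add: bernstein_psi_def power_divide mult.commute)
qed

text \<open>For the set \<open>S \<subseteq> {1..m+1}\<close> of selections activating a node, this is
  \<open>U\<^sub>m - m/(m+1) U\<^sub>m\<^sub>+\<^sub>1\<close>; summed over all nodes it gives \<open>m (R\<^sub>m - R\<^sub>m\<^sub>+\<^sub>1)\<close>.\<close>
definition gt_drop :: "nat \<Rightarrow> nat set \<Rightarrow> real" where
  "gt_drop m S = (if card (S - {Suc m}) = 1 then 1 else 0)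
     - real m / real (Suc m) * (if card S = 1 then 1 else 0)"

lemma gt_drop_eq_zero:
  assumes S: "S \<subseteq> {1..Suc m}"
    and "\<not>(\<exists>j\<in>{1..m}. S = {j})" "\<not>(\<exists>j\<in>{1..m}. S = {j, Suc m})" "S \<noteq> {Suc m}"
  shows "gt_drop m S = 0"
proof -
  have "card S \<noteq> 1"
  proof
    assume "card S = 1"
    then obtain j where "S = {j}"
      by (auto simp: card_Suc_eq)
    then show False
      using assms by (cases "j = Suc m") auto
  qed
  moreover have "card (S - {Suc m}) \<noteq> 1"
  proof
    assume "card (S - {Suc m}) = 1"
    then obtain j where j: "S - {Suc m} = {j}"
      by (auto simp: card_Suc_eq)
    then have "j \<in> S" "j \<noteq> Suc m"
      by auto
    then have "j \<in> {1..m}"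
      using S by auto
    moreover have "S = {j} \<or> S = {j, Suc m}"
      using j by auto
    ultimately show False
      using assms by auto
  qed
  ultimately show ?thesis
    by (simp add: gt_drop_def)
qed

lemma exp_gt_drop:
  assumes S: "S \<subseteq> {1..Suc m}"
  shows "exp (\<theta> * gt_drop m S) = 1
     + (exp (\<theta> / Suc m) - 1) * (if \<exists>j\<in>{1..m}. S = {j} then 1 else 0)
     + (exp \<theta> - 1) * (if \<exists>j\<in>{1..m}. S = {j, Suc m} then 1 else 0)
     + (exp (- \<theta> * m / Suc m) - 1) * (if S = {Suc m} then 1 else 0)"
proof -
  consider (early) j where "j \<in> {1..m}" "S = {j}"
    | (both) j where "j \<in> {1..m}" "S = {j, Suc m}"
    | (last) "S = {Suc m}"
    | (none) "\<not>(\<exists>j\<in>{1..m}. S = {j})" "\<not>(\<exists>j\<in>{1..m}. S = {j, Suc m})" "S \<noteq> {Suc m}"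
    by blast
  then show ?thesis
  proof cases
    case early
    then have "gt_drop m S = 1 / Suc m" "\<not>(\<exists>j\<in>{1..m}. S = {j, Suc m})" "S \<noteq> {Suc m}"
      by (auto simp: gt_drop_def field_simps)
    then show ?thesis
      using early by auto
  next
    case both
    then have "S - {Suc m} = {j}" "card S = 2"
      by auto
    then have "gt_drop m S = 1"
      by (simp add: gt_drop_def)
    moreover have "\<not>(\<exists>j\<in>{1..m}. S = {j})" "S \<noteq> {Suc m}"
      using both by (auto simp: doubleton_eq_iff)
    ultimately show ?thesis
      using both by auto
  next
    case last
    then show ?thesis
      by (auto simp: gt_drop_def)
  next
    case none
    then show ?thesis
      by (simp add: gt_drop_eq_zero[OF S])
  qed
qed

text \<open>The moment generating function of \<open>gt_drop m\<close> when the \<open>m + 1\<close> selections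
  activate the node independently with probability \<open>p\<close>; the three correction terms belong to
  the activation patterns \<open>{j}\<close>, \<open>{j, m+1}\<close> (\<open>j \<le> m\<close>) and \<open>{m+1}\<close>.\<close>
definition drop_mgf :: "nat \<Rightarrow> real \<Rightarrow> real \<Rightarrow> real" where
  "drop_mgf m \<theta> p = 1 + (exp (\<theta> / Suc m) - 1) * (m * p * (1 - p) ^ m)
     + (exp \<theta> - 1) * (m * p^2 * (1 - p) ^ (m - 1))
     + (exp (- \<theta> * m / Suc m) - 1) * (p * (1 - p) ^ m)"

lemma drop_mgf_zero [simp]: "drop_mgf m \<theta> 0 = 1"
  by (simp add: drop_mgf_def)

lemma drop_mgf_le_moments:
  fixes p \<theta> :: real and m :: nat
  assumes p: "0 \<le> p" "p \<le> 1" and \<theta>: "0 \<le> \<theta>" "\<theta> < 3"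
  defines "q \<equiv> 1 - p" and "s \<equiv> real (Suc m)"
  shows "drop_mgf m \<theta> p \<le> 1 + \<theta> * (m * p^2 * q ^ (m - 1))
           + bernstein_psi \<theta> * (m * p^2 * q ^ (m - 1) + m * p * q ^ m / s)"
proof -
  let ?\<psi> = "bernstein_psi \<theta>"
  have s: "1 \<le> s" "s = m + 1"
    by (simp_all add: s_def)
  have "exp (\<theta> / s) \<le> 1 + \<theta> / s + bernstein_psi (\<theta> / s)"
    using \<theta> s by (intro exp_le_bernstein) (auto simp: field_simps)
  then have "exp (\<theta> / s) - 1 \<le> \<theta> / s + ?\<psi> / s^2"
    using bernstein_psi_scale[OF \<theta> s(1)] by linarith
  moreover have "exp \<theta> - 1 \<le> \<theta> + ?\<psi>"
    using exp_le_bernstein[OF \<theta>] by simp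
  moreover have "exp (- \<theta> * m / s) - 1 \<le> - \<theta> * m / s + ?\<psi> * m^2 / s^2"
  proof -
    have "exp (- \<theta> * m / s) \<le> 1 + (- \<theta> * m / s) + \<theta>^2/2 * m^2/s^2"
      using exp_le_quadratic_of_nonpos[of "- \<theta> * m / s"] \<theta> s
      by (simp add: power_divide power_mult_distrib)
    also have "\<theta>^2/2 * m^2/s^2 \<le> ?\<psi> * m^2/s^2"
      using bernstein_psi_ge[OF \<theta>] by (intro divide_right_mono mult_right_mono) auto
    finally show ?thesis by simp
  qed
  moreover have "0 \<le> m * p * q ^ m" "0 \<le> m * p^2 * q ^ (m - 1)" "0 \<le> p * q ^ m"
    using p by (auto simp: q_def)
  ultimately have "drop_mgf m \<theta> p \<le> 1 + (\<theta> / s + ?\<psi> / s^2) * (m * p * q ^ m)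
      + (\<theta> + ?\<psi>) * (m * p^2 * q ^ (m - 1)) + (- \<theta> * m / s + ?\<psi> * m^2 / s^2) * (p * q ^ m)"
    unfolding drop_mgf_def q_def[symmetric] s_def[symmetric]
    by (intro add_mono mult_right_mono) auto
  also have "\<dots> = 1 + \<theta> * (m * p^2 * q ^ (m - 1)) + ?\<psi> * (m * p^2 * q ^ (m - 1) + m * p * q ^ m / s)"
  proof -
    have "1 + (\<theta>/t + ?\<psi>/t^2) * ((t-1)*p*Q) + (\<theta>+?\<psi>) * b + (-\<theta>*(t-1)/t + ?\<psi>*(t-1)^2/t^2) * (p*Q)
        = 1 + \<theta> * b + ?\<psi> * (b + (t-1)*p*Q/t)" if "t \<noteq> 0" for t Q b :: real
      using that by (simp add: field_simps power2_eq_square)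
    from this[of s "q ^ m" "m * p^2 * q ^ (m - 1)"] show ?thesis
      using s by simp
  qed
  finally show ?thesis .
qed

lemma drop_mean_le:
  fixes p :: real
  assumes "0 \<le> p" "p \<le> 1" "m \<ge> 2"
  shows "m * p^2 * (1 - p) ^ (m - 1) \<le> p * m / (exp 1 * (real m - 1))"
proof -
  have "p * (1 - p) ^ (m - 1) \<le> 1 / (exp 1 * (real m - 1))"
    using mult_one_minus_pow_le[of p "m - 1"] assms by (simp add: of_nat_diff)
  then have "m * p * (p * (1 - p) ^ (m - 1)) \<le> m * p * (1 / (exp 1 * (real m - 1)))"
    using assms by (intro mult_left_mono) auto
  then show ?thesis
    using assms by (simp add: power2_eq_square mult_ac of_nat_diff)
qed

lemma drop_second_moment_le:
  fixes p :: real
  assumes p: "0 \<le> p" "p \<le> 1" and "m \<ge> 1"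
  shows "m * p^2 * (1 - p) ^ (m - 1) + m * p * (1 - p) ^ m / Suc m \<le> p"
proof -
  have "m * p * (1 - p) ^ m / Suc m \<le> p * (1 - p) ^ m"
    using p by (simp add: field_simps mult_right_mono)
  moreover have "m * p^2 * (1 - p) ^ (m - 1) + p * (1 - p) ^ m
      = p * ((1 - p) ^ (m - 1) * (1 + (m - 1) * p))"
    using \<open>m \<ge> 1\<close> by (cases m) (auto simp: algebra_simps power2_eq_square)
  moreover have "p * ((1 - p) ^ (m - 1) * (1 + (m - 1) * p)) \<le> p"
    using one_minus_pow_mult_le_one[OF p, of "m - 1"] p \<open>m \<ge> 1\<close>
    by (simp add: mult_left_le of_nat_diff)
  ultimately show ?thesis
    by linarith
qed

lemma drop_mgf_le_exp:
  fixes p \<theta> :: real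
  assumes p: "0 \<le> p" "p \<le> 1" and \<theta>: "0 \<le> \<theta>" "\<theta> < 3" and "m \<ge> 2"
  shows "drop_mgf m \<theta> p \<le> exp (\<theta> * (p * m / (exp 1 * (real m - 1))) + bernstein_psi \<theta> * p)"
proof -
  have "0 \<le> \<theta>^2 / 2"
    by simp
  then have "0 \<le> bernstein_psi \<theta>"
    using bernstein_psi_ge[OF \<theta>] by linarith
  then have "bernstein_psi \<theta> * (m * p^2 * (1 - p) ^ (m - 1) + m * p * (1 - p) ^ m / Suc m)
      \<le> bernstein_psi \<theta> * p"
    using drop_second_moment_le[OF p, of m] \<open>m \<ge> 2\<close> by (intro mult_left_mono) auto
  moreover have "\<theta> * (m * p^2 * (1 - p) ^ (m - 1)) \<le> \<theta> * (p * m / (exp 1 * (real m - 1)))"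
    using drop_mean_le[OF p \<open>m \<ge> 2\<close>] \<theta> by (intro mult_left_mono) auto
  ultimately have "drop_mgf m \<theta> p \<le> 1 + \<theta> * (p * m / (exp 1 * (real m - 1))) + bernstein_psi \<theta> * p"
    using drop_mgf_le_moments[OF p \<theta>, of m] by simp
  also have "\<dots> \<le> exp (\<theta> * (p * m / (exp 1 * (real m - 1))) + bernstein_psi \<theta> * p)"
    using exp_ge_add_one_self by (simp add: add.assoc)
  finally show ?thesis .
qed

lemma bernstein_exponent_ge:
  fixes lam L m :: real
  assumes lam: "lam > 0" and L: "L > 0" and m: "m \<ge> 2"
  defines "r \<equiv> sqrt (L / lam)"
  shows "L \<le> 3 * r / (r + 3) * (m * sqrt (2 * lam / m * L) + L / 3)
               - bernstein_psi (3 * r / (r + 3)) * lam"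
proof -
  have r: "r > 0" "L = r^2 * lam"
    using lam L by (simp_all add: r_def)
  have "(2 * r * lam / m)^2 = (2 / m) * (2 * lam / m * L)"
    using m unfolding r(2) by (simp add: field_simps power2_eq_square)
  also have "\<dots> \<le> 2 * lam / m * L"
    using m lam L by (intro mult_left_le_one_le) auto
  finally have "2 * r * lam / m \<le> sqrt (2 * lam / m * L)"
    by (rule real_le_rsqrt)
  then have "2 * r * lam \<le> m * sqrt (2 * lam / m * L)"
    using m by (simp add: field_simps)
  then have "3 * r / (r + 3) * (2 * r * lam + L / 3) \<le> 3 * r / (r + 3) * (m * sqrt (2 * lam / m * L) + L / 3)"
    using r by (intro mult_left_mono) auto
  moreover have "3 * r / (r + 3) * (2 * r * lam + L / 3) - bernstein_psi (3 * r / (r + 3)) * lam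
      = r^2 * lam * (2 * r + 9) / (2 * (r + 3))"
  proof -
    have "r + 3 \<noteq> 0"
      using r by simp
    have psi_frac: "(3 * r / d)^2 / (2 * (3 / d)) = 3 * r^2 / (2 * d)"
      and exponent_frac: "3 * r / d * (2 * r * lam + r^2 * lam / 3) - 3 * r^2 / (2 * d) * lam
             = r^2 * lam * (2 * r + 9) / (2 * d)" if "d \<noteq> 0" for d
      using that by (simp_all add: field_simps power2_eq_square)
    have denominator: "1 - 3 * r / (r + 3) / 3 = 3 / (r + 3)"
      using \<open>r + 3 \<noteq> 0\<close> by (simp add: field_simps)
    have "bernstein_psi (3 * r / (r + 3)) = 3 * r^2 / (2 * (r + 3))"
      unfolding bernstein_psi_def denominator by (rule psi_frac[OF \<open>r + 3 \<noteq> 0\<close>])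
    then show ?thesis
      unfolding r(2) by (simp only: exponent_frac[OF \<open>r + 3 \<noteq> 0\<close>])
  qed
  moreover have "r^2 * lam \<le> r^2 * lam * (2 * r + 9) / (2 * (r + 3))"
    using r lam by (simp add: field_simps)
  ultimately show ?thesis
    using r(2) by linarith
qed

lemma (in prob_space) indep_sum_tail_le_prod_mgf:
  fixes Y :: "'i \<Rightarrow> 'a \<Rightarrow> real"
  assumes "finite I" and indep: "indep_vars (\<lambda>_. borel) Y I" and "\<theta> > 0"
    and int: "\<And>i. i \<in> I \<Longrightarrow> integrable M (\<lambda>\<omega>. exp (\<theta> * Y i \<omega>))"
  shows "measure M {\<omega>\<in>space M. a \<le> (\<Sum>i\<in>I. Y i \<omega>)}
           \<le> (\<Prod>i\<in>I. \<integral>\<omega>. exp (\<theta> * Y i \<omega>) \<partial>M) / exp (\<theta> * a)"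
proof -
  have indep_exp: "indep_vars (\<lambda>_. borel) (\<lambda>i \<omega>. exp (\<theta> * Y i \<omega>)) I"
    by (rule indep_vars_compose2[OF indep]) auto
  have "{\<omega>\<in>space M. a \<le> (\<Sum>i\<in>I. Y i \<omega>)}
      = {\<omega>\<in>space M. exp (\<theta> * a) \<le> (\<Prod>i\<in>I. exp (\<theta> * Y i \<omega>))}"
    using \<open>\<theta> > 0\<close> by (auto simp: exp_sum[OF \<open>finite I\<close>, symmetric] sum_distrib_left[symmetric])
  also have "measure M \<dots> \<le> (\<integral>\<omega>. (\<Prod>i\<in>I. exp (\<theta> * Y i \<omega>)) \<partial>M) / exp (\<theta> * a)"
    by (intro integral_Markov_inequality_measure[where A="space M"]
        indep_vars_integrable[OF \<open>finite I\<close> indep_exp] int) (auto intro!: prod_nonneg)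
  also have "(\<integral>\<omega>. (\<Prod>i\<in>I. exp (\<theta> * Y i \<omega>)) \<partial>M) = (\<Prod>i\<in>I. \<integral>\<omega>. exp (\<theta> * Y i \<omega>) \<partial>M)"
    by (intro indep_vars_lebesgue_integral[OF \<open>finite I\<close> indep_exp] int)
  finally show ?thesis .
qed

definition activation_times :: "(nat \<Rightarrow> 'a \<Rightarrow> 'w \<Rightarrow> bool) \<Rightarrow> nat \<Rightarrow> 'a \<Rightarrow> 'w \<Rightarrow> nat set" where
  "activation_times X n u \<omega> = {i \<in> {1..n}. X i u \<omega>}"

lemma activation_times_subset: "activation_times X n u \<omega> \<subseteq> {1..n}"
  by (auto simp: activation_times_def)

locale bernoulli_activations = prob_space M
  for M :: "'w measure" and A :: "'a set" and p :: "'a \<Rightarrow> real"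
    and X :: "nat \<Rightarrow> 'a \<Rightarrow> 'w \<Rightarrow> bool" +
  assumes p_nonneg: "u \<in> A \<Longrightarrow> 0 \<le> p u" and p_le_one: "u \<in> A \<Longrightarrow> p u \<le> 1"
    and indep_activations: "indep_vars (\<lambda>_. count_space UNIV) (\<lambda>(i, u). X i u) ({1..} \<times> A)"
    and distr_activation:
      "i \<ge> 1 \<Longrightarrow> u \<in> A \<Longrightarrow> distr M (count_space UNIV) (X i u) = measure_pmf (bernoulli_pmf (p u))"
begin

lemma measurable_activation:
  "i \<ge> 1 \<Longrightarrow> u \<in> A \<Longrightarrow> X i u \<in> measurable M (count_space UNIV)"
  using indep_activations unfolding indep_vars_def by auto

lemma prob_activation:
  assumes "i \<ge> 1" "u \<in> A"
  shows "prob {\<omega>\<in>space M. X i u \<omega> = b} = (if b then p u else 1 - p u)"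
proof -
  have "prob {\<omega>\<in>space M. X i u \<omega> = b} = measure (distr M (count_space UNIV) (X i u)) {b}"
    using measurable_activation[OF assms] by (simp add: measure_distr vimage_def Int_def conj_commute)
  also have "\<dots> = (if b then p u else 1 - p u)"
    using assms p_nonneg p_le_one by (simp add: distr_activation measure_pmf_single)
  finally show ?thesis .
qed

text \<open>The activation times of distinct nodes depend on disjoint families of the \<open>X i u\<close>.\<close>
lemma indep_activation_times:
  "indep_vars (\<lambda>_. count_space UNIV) (activation_times X n) A"
proof -
  define K where "K = (\<lambda>u::'a. {1..n} \<times> {u})"
  have "indep_vars (\<lambda>u. PiM (K u) (\<lambda>_. count_space UNIV))
      (\<lambda>u \<omega>. restrict (\<lambda>k. (\<lambda>(i, u). X i u) k \<omega>) (K u)) A"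
    using indep_activations by (rule indep_vars_restrict) (auto simp: K_def disjoint_family_on_def)
  then have "indep_vars (\<lambda>_. count_space UNIV)
      (\<lambda>u \<omega>. {i \<in> {1..n}. restrict (\<lambda>k. (\<lambda>(i, u). X i u) k \<omega>) (K u) (i, u)}) A"
  proof (rule indep_vars_compose2[where Y = "\<lambda>u v. {i \<in> {1..n}. v (i, u)}"])
    fix u
    have "PiM (K u) (\<lambda>_. count_space (UNIV :: bool set)) = count_space (PiE (K u) (\<lambda>_. UNIV))"
      by (intro count_space_PiM_finite) (auto simp: K_def)
    then show "(\<lambda>v. {i \<in> {1..n}. v (i, u)})
        \<in> measurable (PiM (K u) (\<lambda>_. count_space UNIV)) (count_space UNIV)"
      by simp
  qed
  moreover have "{i \<in> {1..n}. restrict (\<lambda>k. (\<lambda>(i, u). X i u) k \<omega>) (K u) (i, u)}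
      = activation_times X n u \<omega>" for u \<omega>
    by (auto simp: K_def activation_times_def)
  ultimately show ?thesis
    by simp
qed

lemma measurable_activation_times:
  "u \<in> A \<Longrightarrow> activation_times X n u \<in> measurable M (count_space UNIV)"
  using indep_activation_times unfolding indep_vars_def by auto

lemma prob_activation_times_eq:
  assumes u: "u \<in> A" and G: "G \<subseteq> {1..n}"
  shows "prob {\<omega>\<in>space M. activation_times X n u \<omega> = G} = p u ^ card G * (1 - p u) ^ (n - card G)"
proof (cases "n = 0")
  case True
  then show ?thesis
    using G by (simp add: activation_times_def prob_space)
next
  case False
  define F where "F = (\<lambda>(i, v). {\<omega>\<in>space M. X i v \<omega> = (i \<in> G)})"
  define K where "K = (\<lambda>i. (i, u)) ` {1..n}"
  have "{\<omega>\<in>space M. activation_times X n u \<omega> = G} = {\<omega>\<in>space M. \<forall>i\<in>{1..n}. X i u \<omega> = (i \<in> G)}"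
    using G unfolding activation_times_def by blast
  also have "\<dots> = (\<Inter>k\<in>K. F k)"
    using False by (force simp: K_def F_def)
  finally have "{\<omega>\<in>space M. activation_times X n u \<omega> = G} = (\<Inter>k\<in>K. F k)" .
  moreover have "indep_sets (\<lambda>k. sigma_sets (space M)
      {(\<lambda>(i, u). X i u) k -` B \<inter> space M | B. B \<in> sets (count_space UNIV)}) ({1..} \<times> A)"
    using indep_activations unfolding indep_vars_def by auto
  then have "prob (\<Inter>k\<in>K. F k) = (\<Prod>k\<in>K. prob (F k))"
  proof (rule indep_setsD)
    show "K \<subseteq> {1..} \<times> A" "K \<noteq> {}" "finite K"
      using u False by (auto simp: K_def)
    show "\<forall>k\<in>K. F k \<in> sigma_sets (space M)
        {(\<lambda>(i, u). X i u) k -` B \<inter> space M |B. B \<in> sets (count_space UNIV)}"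
      by (auto simp: K_def F_def vimage_def Int_def conj_commute intro!: sigma_sets.Basic)
  qed
  moreover have "(\<Prod>k\<in>K. prob (F k)) = (\<Prod>i\<in>{1..n}. if i \<in> G then p u else 1 - p u)"
    unfolding K_def by (subst prod.reindex) (auto simp: inj_on_def F_def prob_activation u)
  moreover have "(\<Prod>i\<in>{1..n}. if i \<in> G then p u else 1 - p u) = p u ^ card G * (1 - p u) ^ (n - card G)"
  proof -
    have "{1..n} \<inter> {i. i \<in> G} = G" "{1..n} \<inter> - {i. i \<in> G} = {1..n} - G"
      using G by auto
    moreover have "card ({1..n} - G) = n - card G"
      using G by (simp add: card_Diff_subset finite_subset)
    ultimately show ?thesis
      by (simp add: prod.If_cases)
  qed
  ultimately show ?thesis
    by simp
qed

lemma sets_activation_times_pred: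
  assumes "u \<in> A"
  shows "{\<omega>\<in>space M. P (activation_times X n u \<omega>)} \<in> sets M"
  using measurable_sets[OF measurable_activation_times[where n = n, OF assms], of "{G. P G}"]
  by (simp add: vimage_def Int_def conj_commute)

lemma prob_activation_patterns:
  fixes m :: nat
  assumes u: "u \<in> A"
  defines "S \<equiv> activation_times X (Suc m) u"
  shows "prob {\<omega>\<in>space M. \<exists>j\<in>{1..m}. S \<omega> = {j}} = m * p u * (1 - p u) ^ m"
    and "prob {\<omega>\<in>space M. \<exists>j\<in>{1..m}. S \<omega> = {j, Suc m}} = m * (p u)^2 * (1 - p u) ^ (m - 1)"
    and "prob {\<omega>\<in>space M. S \<omega> = {Suc m}} = p u * (1 - p u) ^ m"
proof -
  define B where "B = (\<lambda>G. {\<omega>\<in>space M. S \<omega> = G})"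
  have B_sets: "B G \<in> sets M" for G
    unfolding B_def S_def by (rule sets_activation_times_pred[OF u])
  have prob_B: "prob (B G) = p u ^ card G * (1 - p u) ^ (Suc m - card G)" if "G \<subseteq> {1..Suc m}" for G
    unfolding B_def S_def using prob_activation_times_eq[OF u that] .
  have prob_Union: "prob (\<Union>j\<in>J. B (f j)) = (\<Sum>j\<in>J. prob (B (f j)))"
    if "finite J" "inj_on f J" for f :: "nat \<Rightarrow> nat set" and J
  proof (rule measure_finite_Union)
    show "disjoint_family_on (\<lambda>j. B (f j)) J"
      using that(2) unfolding disjoint_family_on_def B_def inj_on_def by auto
  qed (use that(1) B_sets in auto)
  have "{\<omega>\<in>space M. \<exists>j\<in>{1..m}. S \<omega> = {j}} = (\<Union>j\<in>{1..m}. B {j})"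
    unfolding B_def by blast
  also have "prob \<dots> = (\<Sum>j\<in>{1..m}. prob (B {j}))"
    using prob_Union[of "{1..m}" "\<lambda>j. {j}"] by simp
  also have "\<dots> = (\<Sum>j\<in>{1..m}. p u * (1 - p u) ^ m)"
    by (intro sum.cong refl) (subst prob_B, auto)
  finally show "prob {\<omega>\<in>space M. \<exists>j\<in>{1..m}. S \<omega> = {j}} = m * p u * (1 - p u) ^ m"
    by simp
  have "{\<omega>\<in>space M. \<exists>j\<in>{1..m}. S \<omega> = {j, Suc m}} = (\<Union>j\<in>{1..m}. B {j, Suc m})"
    unfolding B_def by blast
  also have "prob \<dots> = (\<Sum>j\<in>{1..m}. prob (B {j, Suc m}))"
    using prob_Union[of "{1..m}" "\<lambda>j. {j, Suc m}"] by (simp add: inj_on_def doubleton_eq_iff)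
  also have "\<dots> = (\<Sum>j\<in>{1..m}. (p u)^2 * (1 - p u) ^ (m - 1))"
    by (intro sum.cong refl) (subst prob_B, auto simp: power2_eq_square)
  finally show "prob {\<omega>\<in>space M. \<exists>j\<in>{1..m}. S \<omega> = {j, Suc m}} = m * (p u)^2 * (1 - p u) ^ (m - 1)"
    by simp
  show "prob {\<omega>\<in>space M. S \<omega> = {Suc m}} = p u * (1 - p u) ^ m"
    using prob_B[of "{Suc m}"] by (simp add: B_def)
qed

lemma integrable_exp_gt_drop_and_integral:
  fixes m :: nat
  assumes u: "u \<in> A"
  defines "S \<equiv> activation_times X (Suc m) u"
  shows "integrable M (\<lambda>\<omega>. exp (\<theta> * gt_drop m (S \<omega>)))"
    and "(\<integral>\<omega>. exp (\<theta> * gt_drop m (S \<omega>)) \<partial>M) = drop_mgf m \<theta> (p u)"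
proof -
  define E1 E2 E3 where "E1 = {\<omega>\<in>space M. \<exists>j\<in>{1..m}. S \<omega> = {j}}"
    and "E2 = {\<omega>\<in>space M. \<exists>j\<in>{1..m}. S \<omega> = {j, Suc m}}"
    and "E3 = {\<omega>\<in>space M. S \<omega> = {Suc m}}"
  define c1 c2 c3 where "c1 = exp (\<theta> / Suc m) - 1" and "c2 = exp \<theta> - 1"
    and "c3 = exp (- \<theta> * m / Suc m) - 1"
  let ?f = "\<lambda>\<omega>. 1 + c1 * indicator E1 \<omega> + c2 * indicator E2 \<omega> + c3 * indicator E3 \<omega> :: real"
  have E_sets: "E1 \<in> sets M" "E2 \<in> sets M" "E3 \<in> sets M"
    unfolding E1_def E2_def E3_def S_def by (intro sets_activation_times_pred[OF u])+
  have pointwise: "exp (\<theta> * gt_drop m (S \<omega>)) = ?f \<omega>" if "\<omega> \<in> space M" for \<omega>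
    using exp_gt_drop[OF activation_times_subset[of X "Suc m" u \<omega>], of \<theta>] that
    unfolding c1_def c2_def c3_def E1_def E2_def E3_def S_def indicator_def by auto
  have finite_emeasure: "emeasure M E < \<top>" for E
    using emeasure_finite[of E] less_top by metis
  have "integrable M ?f"
    using E_sets by (intro Bochner_Integration.integrable_add integrable_mult_right integrable_real_indicator)
      (auto simp: finite_emeasure)
  then show "integrable M (\<lambda>\<omega>. exp (\<theta> * gt_drop m (S \<omega>)))"
    by (rule Bochner_Integration.integrable_cong[OF refl, THEN iffD1, rotated]) (simp add: pointwise)
  have "(\<integral>\<omega>. exp (\<theta> * gt_drop m (S \<omega>)) \<partial>M) = (\<integral>\<omega>. ?f \<omega> \<partial>M)"
    by (intro Bochner_Integration.integral_cong refl) (simp add: pointwise)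
  also have "\<dots> = 1 + c1 * prob E1 + c2 * prob E2 + c3 * prob E3"
    using E_sets finite_emeasure prob_space
    by (simp add: Bochner_Integration.integral_add integrable_real_indicator)
  also have "\<dots> = drop_mgf m \<theta> (p u)"
    unfolding drop_mgf_def E1_def E2_def E3_def S_def prob_activation_patterns[OF u] c1_def c2_def c3_def
    by simp
  finally show "(\<integral>\<omega>. exp (\<theta> * gt_drop m (S \<omega>)) \<partial>M) = drop_mgf m \<theta> (p u)" .
qed

lemma prob_sum_gt_drop_ge_le:
  assumes "finite A" "\<theta> > 0"
  shows "prob {\<omega>\<in>space M. a \<le> (\<Sum>u\<in>A. gt_drop m (activation_times X (Suc m) u \<omega>))}
           \<le> (\<Prod>u\<in>A. drop_mgf m \<theta> (p u)) / exp (\<theta> * a)"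
proof -
  have "indep_vars (\<lambda>_. borel) (\<lambda>u \<omega>. gt_drop m (activation_times X (Suc m) u \<omega>)) A"
    by (rule indep_vars_compose2[OF indep_activation_times]) simp
  from indep_sum_tail_le_prod_mgf[OF \<open>finite A\<close> this \<open>\<theta> > 0\<close>] show ?thesis
    using integrable_exp_gt_drop_and_integral by simp
qed

lemma prob_sum_gt_drop_ge_le_exp:
  assumes "finite A" "m \<ge> 2" "0 < \<theta>" "\<theta> < 3"
  shows "prob {\<omega>\<in>space M. a \<le> (\<Sum>u\<in>A. gt_drop m (activation_times X (Suc m) u \<omega>))}
           \<le> exp (\<theta> * ((\<Sum>u\<in>A. p u) * m / (exp 1 * (real m - 1)))
                   + bernstein_psi \<theta> * (\<Sum>u\<in>A. p u) - \<theta> * a)"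
proof -
  have "(\<Prod>u\<in>A. drop_mgf m \<theta> (p u))
      \<le> (\<Prod>u\<in>A. exp (\<theta> * (p u * m / (exp 1 * (real m - 1))) + bernstein_psi \<theta> * p u))"
  proof (rule prod_mono)
    fix u assume "u \<in> A"
    then have "0 \<le> drop_mgf m \<theta> (p u)"
      using integrable_exp_gt_drop_and_integral(2)[where u = u and m = m and \<theta> = \<theta>]
      by (metis Bochner_Integration.integral_nonneg exp_ge_zero)
    then show "0 \<le> drop_mgf m \<theta> (p u) \<and>
        drop_mgf m \<theta> (p u) \<le> exp (\<theta> * (p u * m / (exp 1 * (real m - 1))) + bernstein_psi \<theta> * p u)"
      using drop_mgf_le_exp[of "p u" \<theta> m] \<open>u \<in> A\<close> p_nonneg p_le_one assms by auto
  qed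
  also have "\<dots> = exp (\<theta> * ((\<Sum>u\<in>A. p u) * m / (exp 1 * (real m - 1))) + bernstein_psi \<theta> * (\<Sum>u\<in>A. p u))"
    by (simp add: exp_sum[OF \<open>finite A\<close>, symmetric] sum.distrib sum_distrib_left sum_distrib_right
        sum_divide_distrib)
  finally show ?thesis
    using prob_sum_gt_drop_ge_le[OF \<open>finite A\<close> \<open>0 < \<theta>\<close>, where m = m and a = a]
    by (simp add: exp_diff divide_right_mono order_trans)
qed

lemma prob_sum_gt_drop_ge_le_exp_neg:
  assumes "finite A" "m \<ge> 2" "L > 0"
  defines "lam \<equiv> \<Sum>u\<in>A. p u"
  shows "prob {\<omega>\<in>space M. lam * m / (exp 1 * (real m - 1)) + m * sqrt (2 * lam / m * L) + L / 3
             \<le> (\<Sum>u\<in>A. gt_drop m (activation_times X (Suc m) u \<omega>))} \<le> exp (- L)"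
    (is "prob {\<omega>\<in>space M. ?a \<le> _} \<le> _")
proof (cases "lam = 0")
  case True
  then have "p u = 0" if "u \<in> A" for u
    using \<open>finite A\<close> that p_nonneg unfolding lam_def by (subst (asm) sum_nonneg_eq_0_iff) auto
  then show ?thesis
    using prob_sum_gt_drop_ge_le[OF \<open>finite A\<close>, where \<theta> = 3 and m = m and a = ?a] True
    by (simp add: exp_minus inverse_eq_divide)
next
  case False
  define r where "r = sqrt (L / lam)"
  have "lam > 0"
    using False p_nonneg by (simp add: lam_def order_less_le sum_nonneg)
  then have "r > 0"
    using \<open>L > 0\<close> by (simp add: r_def)
  then have \<theta>: "0 < 3 * r / (r + 3)" "3 * r / (r + 3) < 3"
    by (auto simp: field_simps)
  have "prob {\<omega>\<in>space M. ?a \<le> (\<Sum>u\<in>A. gt_drop m (activation_times X (Suc m) u \<omega>))}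
      \<le> exp (- (3 * r / (r + 3) * (m * sqrt (2 * lam / m * L) + L / 3)
                 - bernstein_psi (3 * r / (r + 3)) * lam))"
    using prob_sum_gt_drop_ge_le_exp[OF \<open>finite A\<close> \<open>m \<ge> 2\<close> \<theta>, of ?a]
    by (simp add: lam_def algebra_simps)
  also have "\<dots> \<le> exp (- L)"
    using bernstein_exponent_ge[OF \<open>lam > 0\<close> \<open>L > 0\<close>, of m] \<open>m \<ge> 2\<close> by (simp add: r_def)
  finally show ?thesis .
qed

end

lemma sum_gt_drop_eq_Rhat_diff:
  assumes "m \<ge> 1"
  shows "(\<Sum>u\<in>A. gt_drop m (activation_times X (Suc m) u \<omega>))
           = m * (Rhat X A m \<omega> - Rhat X A (Suc m) \<omega>)"
proof -
  have "activation_times X (Suc m) u \<omega> - {Suc m} = activation_times X m u \<omega>" for u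
    by (auto simp: activation_times_def)
  then have "gt_drop m (activation_times X (Suc m) u \<omega>) = U X m u \<omega> - m / Suc m * U X (Suc m) u \<omega>" for u
    by (simp add: gt_drop_def U_def activation_times_def)
  then have "(\<Sum>u\<in>A. gt_drop m (activation_times X (Suc m) u \<omega>))
      = (\<Sum>u\<in>A. U X m u \<omega>) - m / Suc m * (\<Sum>u\<in>A. U X (Suc m) u \<omega>)"
    by (simp add: sum_subtractf sum_distrib_left)
  then show ?thesis
    using assms by (simp add: Rhat_def right_diff_distrib)
qed

lemma Rhat_Suc_le_iff_sum_gt_drop:
  assumes "m \<ge> 1"
  shows "Rhat X A (Suc m) \<omega> \<le> Rhat X A m \<omega> - c
           \<longleftrightarrow> m * c \<le> (\<Sum>u\<in>A. gt_drop m (activation_times X (Suc m) u \<omega>))"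
proof -
  have "m * c \<le> m * (Rhat X A m \<omega> - Rhat X A (Suc m) \<omega>) \<longleftrightarrow> c \<le> Rhat X A m \<omega> - Rhat X A (Suc m) \<omega>"
    using assms by (intro mult_le_cancel_left_pos) auto
  then show ?thesis
    unfolding sum_gt_drop_eq_Rhat_diff[OF assms] by linarith
qed

theorem mainTheorem3:
  fixes M :: "'w measure" and A :: "'a set" and p :: "'a \<Rightarrow> real"
    and X :: "nat \<Rightarrow> 'a \<Rightarrow> 'w \<Rightarrow> bool" and s :: nat and \<delta> :: real
  assumes "prob_space M"
    and "finite A"
    and "\<forall>u\<in>A. 0 \<le> p u \<and> p u \<le> 1"
    and "prob_space.indep_vars M (\<lambda>_. count_space UNIV) (\<lambda>(i, u). X i u) ({1..} \<times> A)"
    and "\<forall>i\<ge>1. \<forall>u\<in>A. distr M (count_space UNIV) (X i u) = measure_pmf (bernoulli_pmf (p u))"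
    and "s \<ge> 3"
    and "0 < \<delta>" and "\<delta> < 1"
  shows "measure M {w \<in> space M.
           Rhat X A s w \<le> Rhat X A (s - 1) w
             - (\<Sum>u\<in>A. p u) / (exp 1 * real (s - 2))
             - sqrt (2 * (\<Sum>u\<in>A. p u) / real (s - 1) * ln (1 / \<delta>))
             - ln (1 / \<delta>) / (3 * real (s - 1))} \<le> \<delta>"
proof -
  have "bernoulli_activations M A p X"
    using assms(1,3-5) by (simp add: bernoulli_activations_def bernoulli_activations_axioms_def)
  then interpret bernoulli_activations M A p X .
  define m lam L where "m = s - 1" and "lam = (\<Sum>u\<in>A. p u)" and "L = ln (1 / \<delta>)"
  have s: "real (s - 2) = real m - 1" "s = Suc m" "m \<ge> 1" "m \<ge> 2"
    using assms(6) by (auto simp: m_def)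
  have L: "0 < L" "exp (- L) = \<delta>"
    using assms(7,8) by (simp_all add: L_def ln_div)
  let ?a = "lam * m / (exp 1 * (real m - 1)) + m * sqrt (2 * lam / m * L) + L / 3"
  have event: "{w \<in> space M. Rhat X A s w \<le> Rhat X A (s - 1) w - lam / (exp 1 * real (s - 2))
      - sqrt (2 * lam / real (s - 1) * L) - L / (3 * real (s - 1))}
      = {w\<in>space M. ?a \<le> (\<Sum>u\<in>A. gt_drop m (activation_times X (Suc m) u w))}"
  proof -
    have "m * (lam / (exp 1 * (real m - 1)) + sqrt (2 * lam / m * L) + L / (3 * m)) = ?a"
      using s by (simp add: field_simps)
    then show ?thesis
      unfolding s(1) unfolding s(2) diff_Suc_1 diff_diff_eq Rhat_Suc_le_iff_sum_gt_drop[OF s(3)]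
      by simp
  qed
  have "prob {w\<in>space M. ?a \<le> (\<Sum>u\<in>A. gt_drop m (activation_times X (Suc m) u w))} \<le> \<delta>"
    using prob_sum_gt_drop_ge_le_exp_neg[OF assms(2) s(4) L(1)] L(2) by (simp add: lam_def)
  then show ?thesis
    unfolding lam_def[symmetric] L_def[symmetric] event .
qed

end
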